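(* Suppose (C2) holds. Then the LMS sampling design is a high entropy sampling design. Moreover, under each of SRSWOR, the LMS design and any HE$\pi$PS design, for $\mathbb P$-almost every $\omega$ there are constants $M,M'>0$ such that for all sufficiently large $\nu$, $M\le n^{-1}N\pi_i\le M'$ for all $1\le i\le N$.
   Context: Sequence of nested finite populations of $N=N_\nu$ units with sample size $n=n_\nu<N$, $N,n\to\infty$ as $\nu\to\infty$; size variable values $X_1,\dots,X_N$ are i.i.d. positive random variables on $(\Omega,\mathcal F,\mathbb P)$ (part of i.i.d. population records). A sampling design is $P(s,\omega)$, a probability on the size-$n$ subsets $s$ for each $\omega$; $\pi_i=\sum_{s\ni i}P(s,\omega)$. SRSWOR: each $s$ with probability $\binom Nn^{-1}$. LMS: first unit $U_i$ drawn with probability $X_i/\sum_jX_j$, then $n-1$ units by SRSWOR from the remaining $N-1$. Rejective design (parameters $\alpha_i>0$, $\sum\alpha_i=1$): $n$ draws with replacement with probabilities $\alpha_i$, repeated until $n$ distinct units are drawn. A design is high entropy if $\sum_sP(s,\omega)\log(P(s,\omega)/R(s,\omega))\to0$ as $\nu\to\infty$ a.s. $[\mathbb P]$ for some rejective design $R(s,\omega)$. $\pi$PS: $\pi_i=nX_i/\sum_jX_j$. HE$\pi$PS: high entropy and $\pi$PS. (C2): $X_i\le b$ a.s. for some $0<b<\infty$, $E(X_i^{-2})<\infty$, and $\max_{i\le N}X_i/\min_{i\le N}X_i=O(1)$ as $\nu\to\infty$ a.s. $[\mathbb P]$. *)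

theory Defs
  imports "HOL-Probability.Probability"
begin

definition samples :: "nat \<Rightarrow> nat \<Rightarrow> nat set set" where
  "samples N n = {s. s \<subseteq> {1..N} \<and> card s = n}"

definition is_design :: "nat \<Rightarrow> nat \<Rightarrow> (nat set \<Rightarrow> real) \<Rightarrow> bool" where
  "is_design N n p \<longleftrightarrow> (\<forall>s. 0 \<le> p s) \<and> (\<forall>s. p s \<noteq> 0 \<longrightarrow> s \<in> samples N n)
     \<and> sum p (samples N n) = 1"

definition incl_prob :: "nat \<Rightarrow> nat \<Rightarrow> (nat set \<Rightarrow> real) \<Rightarrow> nat \<Rightarrow> real" where
  "incl_prob N n p i = (\<Sum>s\<in>{s\<in>samples N n. i \<in> s}. p s)"

definition srswor :: "nat \<Rightarrow> nat \<Rightarrow> nat set \<Rightarrow> real" where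
  "srswor N n s = (if s \<in> samples N n then 1 / real (N choose n) else 0)"

text \<open>LMS design: first unit drawn with probability X_i / sum X_j, then n-1 units by SRSWOR
  from the remaining N-1. Hence P(s) = sum over i in s of (X_i / sum_j X_j) / binom(N-1,n-1).\<close>
definition lms :: "nat \<Rightarrow> nat \<Rightarrow> (nat \<Rightarrow> real) \<Rightarrow> nat set \<Rightarrow> real" where
  "lms N n x s = (if s \<in> samples N n then
      (\<Sum>i\<in>s. x i / (\<Sum>j\<in>{1..N}. x j)) * (1 / real ((N - 1) choose (n - 1))) else 0)"

definition rej_params :: "nat \<Rightarrow> (nat \<Rightarrow> real) \<Rightarrow> bool" where
  "rej_params N \<alpha> \<longleftrightarrow> (\<forall>i\<in>{1..N}. 0 < \<alpha> i) \<and> (\<Sum>i\<in>{1..N}. \<alpha> i) = 1"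

text \<open>Rejective design: n i.i.d. draws with replacement with probabilities alpha_i, repeated
  until the n drawn units are distinct; i.e. the law of the set of drawn units conditional on
  the draw sequence (f 0, ..., f (n-1)) being injective.\<close>
definition rejective :: "nat \<Rightarrow> nat \<Rightarrow> (nat \<Rightarrow> real) \<Rightarrow> nat set \<Rightarrow> real" where
  "rejective N n \<alpha> s =
     (\<Sum>f\<in>{f\<in>{..<n} \<rightarrow>\<^sub>E {1..N}. inj_on f {..<n} \<and> f ` {..<n} = s}. \<Prod>k<n. \<alpha> (f k)) /
     (\<Sum>f\<in>{f\<in>{..<n} \<rightarrow>\<^sub>E {1..N}. inj_on f {..<n}}. \<Prod>k<n. \<alpha> (f k))"

definition kl_div :: "nat \<Rightarrow> nat \<Rightarrow> (nat set \<Rightarrow> real) \<Rightarrow> (nat set \<Rightarrow> real) \<Rightarrow> real" where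
  "kl_div N n p r = (\<Sum>s\<in>samples N n. p s * ln (p s / r s))"

definition high_entropy ::
  "'a measure \<Rightarrow> (nat \<Rightarrow> nat) \<Rightarrow> (nat \<Rightarrow> nat) \<Rightarrow> (nat \<Rightarrow> 'a \<Rightarrow> nat set \<Rightarrow> real) \<Rightarrow> bool" where
  "high_entropy M N n p \<longleftrightarrow> (\<exists>\<alpha> :: nat \<Rightarrow> 'a \<Rightarrow> nat \<Rightarrow> real.
     AE \<omega> in M. (\<forall>\<nu>. rej_params (N \<nu>) (\<alpha> \<nu> \<omega>)) \<and>
       (\<lambda>\<nu>. kl_div (N \<nu>) (n \<nu>) (p \<nu> \<omega>) (rejective (N \<nu>) (n \<nu>) (\<alpha> \<nu> \<omega>))) \<longlonglongrightarrow> 0)"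

definition pips ::
  "'a measure \<Rightarrow> (nat \<Rightarrow> nat) \<Rightarrow> (nat \<Rightarrow> nat) \<Rightarrow> (nat \<Rightarrow> 'a \<Rightarrow> real)
     \<Rightarrow> (nat \<Rightarrow> 'a \<Rightarrow> nat set \<Rightarrow> real) \<Rightarrow> bool" where
  "pips M N n X p \<longleftrightarrow> (AE \<omega> in M. \<forall>\<^sub>F \<nu> in sequentially. \<forall>i\<in>{1..N \<nu>}.
      incl_prob (N \<nu>) (n \<nu>) (p \<nu> \<omega>) i = real (n \<nu>) * X i \<omega> / (\<Sum>j\<in>{1..N \<nu>}. X j \<omega>))"

definition incl_bounded ::
  "'a measure \<Rightarrow> (nat \<Rightarrow> nat) \<Rightarrow> (nat \<Rightarrow> nat) \<Rightarrow> (nat \<Rightarrow> 'a \<Rightarrow> nat set \<Rightarrow> real) \<Rightarrow> bool" where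
  "incl_bounded M N n p \<longleftrightarrow> (AE \<omega> in M. \<exists>c C. 0 < c \<and> 0 < C \<and>
     (\<forall>\<^sub>F \<nu> in sequentially. \<forall>i\<in>{1..N \<nu>}.
        c \<le> real (N \<nu>) * incl_prob (N \<nu>) (n \<nu>) (p \<nu> \<omega>) i / real (n \<nu>) \<and>
        real (N \<nu>) * incl_prob (N \<nu>) (n \<nu>) (p \<nu> \<omega>) i / real (n \<nu>) \<le> C))"

end

(* Almost surely (C2) keeps the size values X_1, ..., X_N within a fixed ratio D of each other
   for all large nu. Then every LMS sample probability P(s) = (sum_{i in s} X_i) / (T C(N-1,n-1)),
   T the population total, is within a factor D of the SRSWOR probability 1 / C(N,n), and
   summing over the samples containing i puts N pi_i / n into [1/D, D]. For a piPS design
   N pi_i / n = N X_i / T lies in [1/D, D] directly; for SRSWOR it equals 1.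

   SRSWOR is the rejective design with equal parameters. By ln y <= y - 1 the divergence of a
   design P from it is at most C(N,n) sum_s P(s)^2 - 1, and counting the samples through one or
   two given units evaluates sum_s P(s)^2 for LMS, which bounds the divergence by D / n -> 0. *)

theory Submission
  imports Defs
begin

lemma of_nat_times_choose:
  "0 < k \<Longrightarrow> of_nat k * of_nat (n choose k) = (of_nat n * of_nat ((n - 1) choose (k - 1)) :: 'a::comm_semiring_1)"
  by (metis of_nat_mult times_binomial_minus1_eq)

lemma times_choose_diff_two_le:
  assumes "2 \<le> n" "n < N"
  shows "N * ((N - 2) choose (n - 2)) \<le> n * ((N - 1) choose (n - 1))"
proof -
  have "(n - 1) * ((N - 1) choose (n - 1)) = (N - 1) * ((N - 2) choose (n - 2))"
    using times_binomial_minus1_eq[of "n - 1" "N - 1"] assms by (simp add: numeral_2_eq_2)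
  then have "(N - 1) * (N * ((N - 2) choose (n - 2))) = N * (n - 1) * ((N - 1) choose (n - 1))"
    by (metis mult.assoc mult.left_commute)
  also have "\<dots> \<le> (N - 1) * n * ((N - 1) choose (n - 1))"
    using assms by (intro mult_right_mono) (auto simp: algebra_simps)
  finally show ?thesis using assms by (simp add: mult.assoc)
qed

lemma finite_samples: "finite (samples N n)"
  unfolding samples_def by (rule finite_subset[of _ "Pow {1..N}"]) auto

lemma card_samples: "card (samples N n) = N choose n"
  by (simp add: samples_def n_subsets)

lemma card_samples_superset:
  assumes "F \<subseteq> {1..N}" "card F \<le> n"
  shows "card {s \<in> samples N n. F \<subseteq> s} = (N - card F) choose (n - card F)"
proof -
  have fin_F: "finite F" using assms(1) finite_subset by blast
  have "bij_betw (\<lambda>s. s - F) {s \<in> samples N n. F \<subseteq> s} {t. t \<subseteq> {1..N} - F \<and> card t = n - card F}"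
  proof (rule bij_betwI[where g = "\<lambda>t. t \<union> F"])
    show "(\<lambda>t. t \<union> F) \<in> {t. t \<subseteq> {1..N} - F \<and> card t = n - card F} \<rightarrow> {s \<in> samples N n. F \<subseteq> s}"
    proof
      fix t assume t: "t \<in> {t. t \<subseteq> {1..N} - F \<and> card t = n - card F}"
      then have "card (t \<union> F) = card t + card F"
        using fin_F by (intro card_Un_disjoint) (auto intro: finite_subset)
      then show "t \<union> F \<in> {s \<in> samples N n. F \<subseteq> s}" using t assms by (auto simp: samples_def)
    qed
  qed (use fin_F in \<open>auto simp: samples_def card_Diff_subset\<close>)
  then have "card {s \<in> samples N n. F \<subseteq> s} = card ({1..N} - F) choose (n - card F)"
    by (simp add: bij_betw_same_card n_subsets)
  then show ?thesis using assms(1) fin_F by (simp add: card_Diff_subset)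
qed

lemma card_samples_containing:
  assumes "i \<in> {1..N}" "1 \<le> n"
  shows "card {s \<in> samples N n. i \<in> s} = (N - 1) choose (n - 1)"
  using assms card_samples_superset[of "{i}" N n] by simp

lemma sum_sum_eq_sum_mult_card:
  fixes g :: "'a \<Rightarrow> 'b::comm_semiring_1"
  assumes "finite S" "finite A" "\<And>s. s \<in> S \<Longrightarrow> F s \<subseteq> A"
  shows "(\<Sum>s\<in>S. \<Sum>a\<in>F s. g a) = (\<Sum>a\<in>A. g a * of_nat (card {s \<in> S. a \<in> F s}))"
proof -
  have "(\<Sum>s\<in>S. \<Sum>a\<in>F s. g a) = (\<Sum>s\<in>S. \<Sum>a\<in>{a \<in> A. a \<in> F s}. g a)"
    using assms(3) by (intro sum.cong refl arg_cong[where f = "sum g"]) auto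
  also have "\<dots> = (\<Sum>a\<in>A. \<Sum>s\<in>{s \<in> S. a \<in> F s}. g a)"
    using assms(1,2) by (rule sum.swap_restrict)
  finally show ?thesis by (simp add: mult.commute)
qed

lemma sum_samples_sum:
  fixes x :: "nat \<Rightarrow> 'b::comm_semiring_1"
  assumes "1 \<le> n"
  shows "(\<Sum>s\<in>samples N n. \<Sum>i\<in>s. x i) = of_nat ((N - 1) choose (n - 1)) * (\<Sum>i\<in>{1..N}. x i)"
proof -
  have "(\<Sum>s\<in>samples N n. \<Sum>i\<in>s. x i) = (\<Sum>i\<in>{1..N}. x i * of_nat (card {s \<in> samples N n. i \<in> s}))"
    by (rule sum_sum_eq_sum_mult_card) (auto simp: finite_samples samples_def)
  also have "\<dots> = (\<Sum>i\<in>{1..N}. x i * of_nat ((N - 1) choose (n - 1)))"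
    using assms by (intro sum.cong refl) (simp add: card_samples_containing)
  finally show ?thesis by (simp add: sum_distrib_right mult.commute)
qed

lemma sum_samples_sum_squared:
  fixes x :: "nat \<Rightarrow> 'b::comm_ring_1" and N n :: nat
  assumes "2 \<le> n"
  defines "B1 \<equiv> of_nat ((N - 1) choose (n - 1))" and "B2 \<equiv> of_nat ((N - 2) choose (n - 2))"
  shows "(\<Sum>s\<in>samples N n. (\<Sum>i\<in>s. x i)^2)
    = B2 * (\<Sum>i\<in>{1..N}. x i)^2 + (B1 - B2) * (\<Sum>i\<in>{1..N}. (x i)^2)"
proof -
  let ?A = "{1..N}"
  have pair_count: "of_nat (card {s \<in> samples N n. (i, j) \<in> s \<times> s}) = B2 + (if i = j then B1 - B2 else 0)"
    if "(i, j) \<in> ?A \<times> ?A" for i j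
  proof -
    have "{s \<in> samples N n. (i, j) \<in> s \<times> s} = {s \<in> samples N n. {i, j} \<subseteq> s}" by auto
    then show ?thesis using that assms(1) card_samples_superset[of "{i, j}" N n]
      by (cases "i = j") (auto simp: B1_def B2_def numeral_2_eq_2)
  qed
  have "(\<Sum>s\<in>samples N n. (\<Sum>i\<in>s. x i)^2) = (\<Sum>s\<in>samples N n. \<Sum>(i, j)\<in>s \<times> s. x i * x j)"
    by (simp add: power2_eq_square sum_product sum.cartesian_product)
  also have "\<dots> = (\<Sum>p\<in>?A \<times> ?A. (case p of (i, j) \<Rightarrow> x i * x j) * of_nat (card {s \<in> samples N n. p \<in> s \<times> s}))"
    by (rule sum_sum_eq_sum_mult_card) (auto simp: finite_samples samples_def)
  also have "\<dots> = (\<Sum>(i, j)\<in>?A \<times> ?A. x i * x j * (B2 + (if i = j then B1 - B2 else 0)))"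
    using pair_count by (intro sum.cong refl) auto
  also have "\<dots> = B2 * (\<Sum>(i, j)\<in>?A \<times> ?A. x i * x j) + (B1 - B2) * (\<Sum>i\<in>?A. x i * x i)"
    by (simp add: distrib_left sum.distrib sum_distrib_left sum.cartesian_product[symmetric]
        if_distrib[of "\<lambda>c. _ * c"] sum.delta mult_ac cong: if_cong)
  finally show ?thesis
    by (simp add: power2_eq_square sum_product sum.cartesian_product)
qed

lemma injective_image_in_samples:
  assumes "f \<in> {..<n} \<rightarrow>\<^sub>E {1..N}" "inj_on f {..<n}"
  shows "f ` {..<n} \<in> samples N n"
  using assms by (auto simp: samples_def card_image)

lemma injections_onto_sample_eq:
  assumes "s \<in> samples N n"
  shows "{f \<in> {..<n} \<rightarrow>\<^sub>E {1..N}. inj_on f {..<n} \<and> f ` {..<n} = s}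
    = {f \<in> {..<n} \<rightarrow>\<^sub>E s. inj_on f {..<n}}"
proof -
  have "f ` {..<n} = s" if "f \<in> {..<n} \<rightarrow>\<^sub>E s" "inj_on f {..<n}" for f
    using that assms by (intro card_subset_eq) (auto simp: samples_def card_image intro: finite_subset)
  then show ?thesis using assms by (auto simp: samples_def)
qed

lemma card_injections_onto_sample:
  assumes "s \<in> samples N n"
  shows "card {f \<in> {..<n} \<rightarrow>\<^sub>E {1..N}. inj_on f {..<n} \<and> f ` {..<n} = s} = (\<Prod>k<n. n - k)"
proof -
  have "finite s" "card s = n" using assms by (auto simp: samples_def intro: finite_subset)
  then show ?thesis
    unfolding injections_onto_sample_eq[OF assms]
    using card_inj_on_subset_funcset[of "{..<n}" s "{..<n}"] by (simp add: atLeast0LessThan)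
qed

lemma rejective_const_eq_srswor:
  assumes "c \<noteq> 0"
  shows "rejective N n (\<lambda>_. c) = srswor N n"
proof
  fix s
  \<comment> \<open>Each injective draw sequence has weight c^n, and each sample is the image of n! of them.\<close>
  define I where "I = {f \<in> {..<n} \<rightarrow>\<^sub>E {1..N}. inj_on f {..<n}}"
  define a where "a = (\<Prod>k<n. n - k)"
  have fin_I: "finite I" unfolding I_def by (rule finite_subset[of _ "{..<n} \<rightarrow>\<^sub>E {1..N}"]) (auto intro: finite_PiE)
  have a_pos: "0 < a" unfolding a_def by (simp add: prod_pos)
  have onto: "card {f \<in> I. f ` {..<n} = t} = a" if "t \<in> samples N n" for t
    using card_injections_onto_sample[OF that] by (simp add: I_def a_def conj_assoc)
  have "(\<lambda>f. f ` {..<n}) ` I \<subseteq> samples N n"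
    using injective_image_in_samples by (auto simp: I_def)
  then have "card I = (\<Sum>t\<in>samples N n. card {f \<in> I. f ` {..<n} = t})"
    using sum.group[OF fin_I finite_samples, where h = "\<lambda>_. 1::nat"] by simp
  also have "\<dots> = (N choose n) * a" by (simp add: onto card_samples)
  finally have card_I: "card I = (N choose n) * a" .
  have rej: "rejective N n (\<lambda>_. c) s = real (card {f \<in> I. f ` {..<n} = s}) / real (card I)"
    using assms by (simp add: rejective_def I_def conj_assoc)
  show "rejective N n (\<lambda>_. c) s = srswor N n s"
  proof (cases "s \<in> samples N n")
    case True
    then show ?thesis using a_pos by (simp add: rej onto card_I srswor_def)
  next
    case False
    then have "{f \<in> I. f ` {..<n} = s} = {}" using injective_image_in_samples by (auto simp: I_def)
    then show ?thesis unfolding rej using False by (simp only:) (simp add: srswor_def)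
  qed
qed

lemma mult_ln_div_bounds:
  fixes p q :: real
  assumes "0 \<le> p" "0 < q"
  shows "p - q \<le> p * ln (p / q)" and "p * ln (p / q) \<le> p^2 / q - p"
proof -
  have "p - q \<le> p * ln (p / q) \<and> p * ln (p / q) \<le> p^2 / q - p"
  proof (cases "p = 0")
    case False
    then have y: "0 < p / q" using assms by simp
    have "ln (q / p) \<le> q / p - 1" using assms False by (intro ln_le_minus_one) simp
    then have "1 - q / p \<le> ln (p / q)" using y assms False by (simp add: ln_div)
    moreover have "ln (p / q) \<le> p / q - 1" using y by (rule ln_le_minus_one)
    ultimately have "p * (1 - q / p) \<le> p * ln (p / q) \<and> p * ln (p / q) \<le> p * (p / q - 1)"
      using assms by (simp add: mult_left_mono)
    then show ?thesis using False by (simp add: algebra_simps power2_eq_square)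
  qed (use assms in simp)
  then show "p - q \<le> p * ln (p / q)" "p * ln (p / q) \<le> p^2 / q - p" by simp_all
qed

lemma relative_entropy_uniform_bounds:
  fixes p :: "'a \<Rightarrow> real"
  assumes "finite S" "\<And>s. s \<in> S \<Longrightarrow> 0 \<le> p s" "(\<Sum>s\<in>S. p s) = 1"
  shows "0 \<le> (\<Sum>s\<in>S. p s * ln (p s / (1 / card S)))"
    and "(\<Sum>s\<in>S. p s * ln (p s / (1 / card S))) \<le> card S * (\<Sum>s\<in>S. (p s)^2) - 1"
proof -
  have "S \<noteq> {}" using assms(3) by auto
  then have q: "0 < 1 / real (card S)" using assms(1) by (simp add: card_gt_0_iff)
  have "0 = (\<Sum>s\<in>S. p s - 1 / card S)"
    using \<open>S \<noteq> {}\<close> assms by (simp add: sum_subtractf)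
  also have "\<dots> \<le> (\<Sum>s\<in>S. p s * ln (p s / (1 / card S)))"
    using mult_ln_div_bounds(1)[OF assms(2) q] by (rule sum_mono)
  finally show "0 \<le> (\<Sum>s\<in>S. p s * ln (p s / (1 / card S)))" .
  have "(\<Sum>s\<in>S. p s * ln (p s / (1 / card S))) \<le> (\<Sum>s\<in>S. (p s)^2 / (1 / card S) - p s)"
    using mult_ln_div_bounds(2)[OF assms(2) q] by (rule sum_mono)
  also have "\<dots> = card S * (\<Sum>s\<in>S. (p s)^2) - 1"
    using assms(3) by (simp add: sum_subtractf sum_distrib_left mult.commute)
  finally show "(\<Sum>s\<in>S. p s * ln (p s / (1 / card S))) \<le> card S * (\<Sum>s\<in>S. (p s)^2) - 1" .
qed

lemma kl_div_srswor_bounds: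
  fixes p :: "nat set \<Rightarrow> real"
  assumes "is_design N n p"
  shows "0 \<le> kl_div N n p (srswor N n)"
    and "kl_div N n p (srswor N n) \<le> (N choose n) * (\<Sum>s\<in>samples N n. (p s)^2) - 1"
proof -
  have kl: "kl_div N n p (srswor N n) = (\<Sum>s\<in>samples N n. p s * ln (p s / (1 / card (samples N n))))"
    unfolding kl_div_def by (intro sum.cong refl) (simp add: srswor_def card_samples)
  show "0 \<le> kl_div N n p (srswor N n)"
    and "kl_div N n p (srswor N n) \<le> (N choose n) * (\<Sum>s\<in>samples N n. (p s)^2) - 1"
    unfolding kl using relative_entropy_uniform_bounds[OF finite_samples, where p = p] assms
    by (auto simp: is_design_def card_samples)
qed

definition ratio_bounded :: "nat \<Rightarrow> real \<Rightarrow> (nat \<Rightarrow> real) \<Rightarrow> bool" where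
  "ratio_bounded N D x \<longleftrightarrow> (\<forall>i\<in>{1..N}. 0 < x i) \<and> (\<forall>i\<in>{1..N}. \<forall>j\<in>{1..N}. x i \<le> D * x j)"

lemma ratio_bounded_ge_one: "ratio_bounded N D x \<Longrightarrow> 0 < N \<Longrightarrow> 1 \<le> D"
  unfolding ratio_bounded_def by (metis atLeastAtMost_iff le_refl less_one mult_le_cancel_right1 not_le)

lemma ratio_bounded_mono: "ratio_bounded N D x \<Longrightarrow> D \<le> D' \<Longrightarrow> ratio_bounded N D' x"
  unfolding ratio_bounded_def by (meson less_imp_le mult_right_mono order_trans)

lemma ratio_bounded_of_Max_Min:
  assumes "0 < N" "\<And>i. i \<in> {1..N} \<Longrightarrow> 0 < x i" "Max (x ` {1..N}) / Min (x ` {1..N}) \<le> C"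
  shows "ratio_bounded N C x"
  unfolding ratio_bounded_def
proof (intro conjI ballI)
  fix i j assume ij: "i \<in> {1..N}" "j \<in> {1..N}"
  have "Min (x ` {1..N}) \<in> x ` {1..N}" using assms(1) by (intro Min_in) auto
  then have min_pos: "0 < Min (x ` {1..N})" using assms(2) by auto
  have "x i \<le> Max (x ` {1..N})" using ij by (intro Max_ge) auto
  also have "\<dots> \<le> C * Min (x ` {1..N})" using assms(3) min_pos by (simp add: pos_divide_le_eq)
  also have "\<dots> \<le> C * x j"
  proof (rule mult_left_mono)
    show "Min (x ` {1..N}) \<le> x j" using ij by (intro Min_le) auto
    have "0 < Max (x ` {1..N})" using \<open>x i \<le> Max (x ` {1..N})\<close> assms(2)[OF ij(1)] by linarith
    then show "0 \<le> C" using assms(3) min_pos by (meson divide_nonneg_pos less_imp_le order_trans)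
  qed
  finally show "x i \<le> C * x j" .
qed (use assms(2) in auto)

lemma ratio_bounded_sum_bounds:
  assumes "ratio_bounded N D x" "i \<in> {1..N}"
  shows "N * x i \<le> D * (\<Sum>j\<in>{1..N}. x j)" and "(\<Sum>j\<in>{1..N}. x j) \<le> D * (N * x i)"
proof -
  have "N * x i = (\<Sum>j\<in>{1..N}. x i)" by simp
  also have "\<dots> \<le> (\<Sum>j\<in>{1..N}. D * x j)"
    using assms by (intro sum_mono) (auto simp: ratio_bounded_def)
  finally show "N * x i \<le> D * (\<Sum>j\<in>{1..N}. x j)" by (simp add: sum_distrib_left)
  have "(\<Sum>j\<in>{1..N}. x j) \<le> (\<Sum>j\<in>{1..N}. D * x i)"
    using assms by (intro sum_mono) (auto simp: ratio_bounded_def)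
  then show "(\<Sum>j\<in>{1..N}. x j) \<le> D * (N * x i)" by (simp add: mult_ac)
qed

lemma ratio_bounded_sum_squares:
  assumes "ratio_bounded N D x"
  shows "N * (\<Sum>i\<in>{1..N}. (x i)^2) \<le> D * (\<Sum>i\<in>{1..N}. x i)^2"
proof -
  have "N * (\<Sum>i\<in>{1..N}. (x i)^2) = (\<Sum>i\<in>{1..N}. x i * (N * x i))"
    by (simp add: sum_distrib_left power2_eq_square mult_ac)
  also have "\<dots> \<le> (\<Sum>i\<in>{1..N}. x i * (D * (\<Sum>j\<in>{1..N}. x j)))"
    using assms ratio_bounded_sum_bounds(1)[OF assms]
    by (intro sum_mono mult_left_mono) (auto simp: ratio_bounded_def less_imp_le)
  also have "\<dots> = D * (\<Sum>i\<in>{1..N}. x i)^2"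
    by (simp add: power2_eq_square sum_distrib_left sum_distrib_right mult_ac)
  finally show ?thesis .
qed

lemma ratio_bounded_sample_sum_bounds:
  assumes "ratio_bounded N D x" "s \<in> samples N n"
  shows "N * (\<Sum>i\<in>s. x i) \<le> D * n * (\<Sum>j\<in>{1..N}. x j)"
    and "n * (\<Sum>j\<in>{1..N}. x j) \<le> D * N * (\<Sum>i\<in>s. x i)"
proof -
  have sub: "s \<subseteq> {1..N}" and card: "card s = n" using assms(2) by (auto simp: samples_def)
  have "N * (\<Sum>i\<in>s. x i) = (\<Sum>i\<in>s. N * x i)" by (simp add: sum_distrib_left)
  also have "\<dots> \<le> (\<Sum>i\<in>s. D * (\<Sum>j\<in>{1..N}. x j))"
    using ratio_bounded_sum_bounds(1)[OF assms(1)] sub by (intro sum_mono) auto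
  finally show "N * (\<Sum>i\<in>s. x i) \<le> D * n * (\<Sum>j\<in>{1..N}. x j)" using card by (simp add: mult_ac)
  have "n * (\<Sum>j\<in>{1..N}. x j) \<le> (\<Sum>i\<in>s. D * (N * x i))"
    using ratio_bounded_sum_bounds(2)[OF assms(1)] sub card by (auto intro!: sum_bounded_below)
  then show "n * (\<Sum>j\<in>{1..N}. x j) \<le> D * N * (\<Sum>i\<in>s. x i)" by (simp add: sum_distrib_left mult_ac)
qed

lemma ratio_bounded_normalized_bounds:
  assumes x: "ratio_bounded N D x" and i: "i \<in> {1..N}"
  shows "1 / D \<le> N * x i / (\<Sum>j\<in>{1..N}. x j)" and "N * x i / (\<Sum>j\<in>{1..N}. x j) \<le> D"
proof -
  have "0 < (\<Sum>j\<in>{1..N}. x j)" "0 < x i" using x i by (auto simp: ratio_bounded_def intro!: sum_pos)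
  moreover have "0 < D" using ratio_bounded_ge_one[OF x] i by fastforce
  ultimately show "1 / D \<le> N * x i / (\<Sum>j\<in>{1..N}. x j)" "N * x i / (\<Sum>j\<in>{1..N}. x j) \<le> D"
    using ratio_bounded_sum_bounds[OF x i] by (simp_all add: field_simps)
qed

lemma lms_eq:
  "s \<in> samples N n \<Longrightarrow>
    lms N n x s = (\<Sum>i\<in>s. x i) / ((\<Sum>j\<in>{1..N}. x j) * ((N - 1) choose (n - 1)))"
  by (simp add: lms_def sum_divide_distrib[symmetric])

lemma is_design_lms:
  assumes "1 \<le> n" "n \<le> N" "\<And>i. i \<in> {1..N} \<Longrightarrow> 0 < x i"
  shows "is_design N n (lms N n x)"
proof -
  have "0 < (\<Sum>j\<in>{1..N}. x j)" using assms by (intro sum_pos) auto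
  moreover have "0 \<le> (\<Sum>i\<in>s. x i)" if "s \<in> samples N n" for s
    using that assms(3) by (intro sum_nonneg) (auto simp: samples_def less_imp_le)
  ultimately show ?thesis
    using sum_samples_sum[OF assms(1), where N = N and x = x] assms(1,2)
    by (auto simp: is_design_def lms_def lms_eq sum_divide_distrib[symmetric])
qed

lemma card_samples_sum_lms_squared_le:
  assumes x: "ratio_bounded N D x" and n: "2 \<le> n" "n < N"
  shows "(N choose n) * (\<Sum>s\<in>samples N n. (lms N n x s)^2) \<le> 1 + D / n"
proof -
  define T where "T = (\<Sum>i\<in>{1..N}. x i)"
  define Q where "Q = (\<Sum>i\<in>{1..N}. (x i)^2)"
  define B1 where "B1 = real ((N - 1) choose (n - 1))"
  define B2 where "B2 = real ((N - 2) choose (n - 2))"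
  have T: "0 < T" using x n by (auto simp: T_def ratio_bounded_def intro!: sum_pos)
  have B1: "0 < B1" using n by (simp add: B1_def)
  have "0 \<le> Q" by (simp add: Q_def sum_nonneg)
  have NQ: "N * Q \<le> D * T^2" using ratio_bounded_sum_squares[OF x] by (simp add: Q_def T_def)
  have NB2: "N * B2 \<le> n * B1"
    using times_choose_diff_two_le[OF n] unfolding B1_def B2_def by (metis of_nat_le_iff of_nat_mult)
  have "(\<Sum>s\<in>samples N n. (lms N n x s)^2) = (\<Sum>s\<in>samples N n. (\<Sum>i\<in>s. x i)^2 / (T * B1)^2)"
    by (intro sum.cong refl) (simp add: lms_eq T_def B1_def power_divide)
  also have "\<dots> = (B2 * T^2 + (B1 - B2) * Q) / (T * B1)^2"
    using sum_samples_sum_squared[OF n(1), where x = x and N = N]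
    by (simp add: T_def Q_def B1_def B2_def sum_divide_distrib[symmetric])
  finally have sq: "(\<Sum>s\<in>samples N n. (lms N n x s)^2) = (B2 * T^2 + (B1 - B2) * Q) / (T * B1)^2" .
  have "N * (B2 * T^2 + (B1 - B2) * Q) \<le> n * B1 * T^2 + D * B1 * T^2"
  proof -
    have "N * B2 * T^2 \<le> n * B1 * T^2" using NB2 by (simp add: mult_right_mono)
    moreover have "(B1 - B2) * (N * Q) \<le> B1 * (D * T^2)"
      using \<open>0 \<le> Q\<close> B1 by (intro mult_mono[OF _ NQ]) (auto simp: B2_def)
    ultimately show ?thesis by (simp add: algebra_simps)
  qed
  then have "N * (B2 * T^2 + (B1 - B2) * Q) / (n * B1 * T^2) \<le> (n * B1 * T^2 + D * B1 * T^2) / (n * B1 * T^2)"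
    using T B1 by (intro divide_right_mono) auto
  also have "\<dots> = 1 + D / n"
    using T B1 n by (simp add: add_divide_distrib)
  also have "N * (B2 * T^2 + (B1 - B2) * Q) / (n * B1 * T^2)
      = (N choose n) * ((B2 * T^2 + (B1 - B2) * Q) / (T * B1)^2)"
  proof -
    have "real (N choose n) = N * B1 / n"
      using of_nat_times_choose[of n N, where 'a = real] n by (simp add: B1_def eq_divide_eq mult.commute)
    then show ?thesis using T B1 by (simp add: power2_eq_square)
  qed
  finally show ?thesis by (simp add: sq)
qed

lemma kl_div_lms_srswor_bounds:
  assumes x: "ratio_bounded N D x" and n: "2 \<le> n" "n < N"
  shows "0 \<le> kl_div N n (lms N n x) (srswor N n)" and "kl_div N n (lms N n x) (srswor N n) \<le> D / n"
proof -
  have design: "is_design N n (lms N n x)"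
    using x n by (intro is_design_lms) (auto simp: ratio_bounded_def)
  show "0 \<le> kl_div N n (lms N n x) (srswor N n)"
    using design by (rule kl_div_srswor_bounds)
  show "kl_div N n (lms N n x) (srswor N n) \<le> D / n"
    using kl_div_srswor_bounds(2)[OF design] card_samples_sum_lms_squared_le[OF x n] by simp
qed

lemma lms_srswor_ratio_bounds:
  assumes x: "ratio_bounded N D x" and n: "1 \<le> n" "n \<le> N"
  shows "lms N n x s \<le> D * srswor N n s" and "srswor N n s \<le> D * lms N n x s"
proof -
  define T where "T = (\<Sum>j\<in>{1..N}. x j)"
  define B1 where "B1 = real ((N - 1) choose (n - 1))"
  have pos: "0 < T" "0 < B1" "0 < real N" using x n by (auto simp: T_def B1_def ratio_bounded_def intro!: sum_pos)
  have srswor: "srswor N n s = n / (N * B1)" if "s \<in> samples N n"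
    using that n pos of_nat_times_choose[of n N, where 'a = real] unfolding B1_def srswor_def by (simp add: field_simps)
  have "lms N n x s \<le> D * srswor N n s \<and> srswor N n s \<le> D * lms N n x s"
  proof (cases "s \<in> samples N n")
    case True
    note bounds = ratio_bounded_sample_sum_bounds[OF x True, folded T_def]
    define S where "S = (\<Sum>i\<in>s. x i)"
    have lms: "lms N n x s = N * S / (N * T * B1)" using pos by (simp add: lms_eq True S_def T_def B1_def)
    have "N * S / (N * T * B1) \<le> D * n * T / (N * T * B1)"
      using bounds(1) pos by (intro divide_right_mono) (auto simp: S_def)
    moreover have "n * T / (N * T * B1) \<le> D * N * S / (N * T * B1)"
      using bounds(2) pos by (intro divide_right_mono) (auto simp: S_def mult_ac)
    ultimately show ?thesis using pos by (simp add: lms srswor True)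
  qed (simp add: lms_def srswor_def)
  then show "lms N n x s \<le> D * srswor N n s" "srswor N n s \<le> D * lms N n x s" by simp_all
qed

lemma incl_prob_le_scaled:
  assumes "\<And>s. s \<in> samples N n \<Longrightarrow> p s \<le> c * q s"
  shows "incl_prob N n p i \<le> c * incl_prob N n q i"
  unfolding incl_prob_def sum_distrib_left using assms by (intro sum_mono) auto

lemma incl_prob_srswor:
  assumes "i \<in> {1..N}" "1 \<le> n" "n \<le> N"
  shows "incl_prob N n (srswor N n) i = n / N"
proof -
  have "incl_prob N n (srswor N n) i = ((N - 1) choose (n - 1)) / (N choose n)"
    using card_samples_containing[OF assms(1,2)] by (simp add: incl_prob_def srswor_def divide_inverse)
  then show ?thesis using assms of_nat_times_choose[of n N, where 'a = real] by (simp add: frac_eq_eq mult.commute)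
qed

lemma normalized_incl_prob_lms_bounds:
  assumes x: "ratio_bounded N D x" and i: "i \<in> {1..N}" and n: "1 \<le> n" "n \<le> N"
  shows "1 / D \<le> N * incl_prob N n (lms N n x) i / n" and "N * incl_prob N n (lms N n x) i / n \<le> D"
proof -
  have "1 \<le> D" using x i by (intro ratio_bounded_ge_one) auto
  have "incl_prob N n (srswor N n) i \<le> D * incl_prob N n (lms N n x) i"
    and "incl_prob N n (lms N n x) i \<le> D * incl_prob N n (srswor N n) i"
    using lms_srswor_ratio_bounds[OF x n] by (auto intro: incl_prob_le_scaled)
  then show "1 / D \<le> N * incl_prob N n (lms N n x) i / n" and "N * incl_prob N n (lms N n x) i / n \<le> D"
    using \<open>1 \<le> D\<close> n i by (simp_all add: incl_prob_srswor field_simps)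
qed

lemma AE_eventually_ratio_bounded:
  assumes pos: "\<And>i. i \<ge> 1 \<Longrightarrow> AE \<omega> in M. 0 < X i \<omega>"
    and Max_Min: "AE \<omega> in M. \<exists>C. \<forall>\<^sub>F \<nu> in sequentially.
      Max ((\<lambda>i. X i \<omega>) ` {1..N \<nu>}) / Min ((\<lambda>i. X i \<omega>) ` {1..N \<nu>}) \<le> C"
    and N: "\<And>\<nu>. 0 < N \<nu>"
  shows "AE \<omega> in M. \<exists>D\<ge>1. \<forall>\<^sub>F \<nu> in sequentially. ratio_bounded (N \<nu>) D (\<lambda>i. X i \<omega>)"
proof -
  have "AE \<omega> in M. \<forall>i. i \<ge> 1 \<longrightarrow> 0 < X i \<omega>"
    using pos by (subst AE_all_countable) (auto intro: AE_I2)
  then show ?thesis using Max_Min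
  proof eventually_elim
    case (elim \<omega>)
    then obtain C where "\<forall>\<^sub>F \<nu> in sequentially.
      Max ((\<lambda>i. X i \<omega>) ` {1..N \<nu>}) / Min ((\<lambda>i. X i \<omega>) ` {1..N \<nu>}) \<le> C" by blast
    then have "\<forall>\<^sub>F \<nu> in sequentially. ratio_bounded (N \<nu>) (max C 1) (\<lambda>i. X i \<omega>)"
      by eventually_elim
        (use N elim(1) in \<open>auto intro: ratio_bounded_mono[OF ratio_bounded_of_Max_Min]\<close>)
    then show ?case by (intro exI[of _ "max C 1"]) simp
  qed
qed

lemma high_entropy_lms:
  assumes ratio: "AE \<omega> in M. \<exists>D. \<forall>\<^sub>F \<nu> in sequentially. ratio_bounded (N \<nu>) D (\<lambda>i. X i \<omega>)"
    and nN: "\<And>\<nu>. n \<nu> < N \<nu>" and n: "filterlim n at_top sequentially"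
  shows "high_entropy M N n (\<lambda>\<nu> \<omega>. lms (N \<nu>) (n \<nu>) (\<lambda>i. X i \<omega>))"
  unfolding high_entropy_def
proof (intro exI[of _ "\<lambda>\<nu> \<omega> _. 1 / real (N \<nu>)"])
  have "rej_params (N \<nu>) (\<lambda>_. 1 / real (N \<nu>))" for \<nu>
    using nN[of \<nu>] by (simp add: rej_params_def)
  moreover have "rejective (N \<nu>) (n \<nu>) (\<lambda>_. 1 / real (N \<nu>)) = srswor (N \<nu>) (n \<nu>)" for \<nu>
    using nN[of \<nu>] by (intro rejective_const_eq_srswor) simp
  moreover have "(\<lambda>\<nu>. kl_div (N \<nu>) (n \<nu>) (lms (N \<nu>) (n \<nu>) (\<lambda>i. X i \<omega>)) (srswor (N \<nu>) (n \<nu>))) \<longlonglongrightarrow> 0"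
    if "\<forall>\<^sub>F \<nu> in sequentially. ratio_bounded (N \<nu>) D (\<lambda>i. X i \<omega>)" for D \<omega>
  proof (rule tendsto_sandwich[where f = "\<lambda>_. 0" and h = "\<lambda>\<nu>. D / n \<nu>"])
    have "\<forall>\<^sub>F \<nu> in sequentially. ratio_bounded (N \<nu>) D (\<lambda>i. X i \<omega>) \<and> 2 \<le> n \<nu>"
      using that n by (simp add: eventually_conj filterlim_at_top)
    then show "\<forall>\<^sub>F \<nu> in sequentially. 0 \<le> kl_div (N \<nu>) (n \<nu>) (lms (N \<nu>) (n \<nu>) (\<lambda>i. X i \<omega>)) (srswor (N \<nu>) (n \<nu>))"
      and "\<forall>\<^sub>F \<nu> in sequentially. kl_div (N \<nu>) (n \<nu>) (lms (N \<nu>) (n \<nu>) (\<lambda>i. X i \<omega>)) (srswor (N \<nu>) (n \<nu>)) \<le> D / n \<nu>"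
      using kl_div_lms_srswor_bounds nN by (auto elim!: eventually_mono)
    show "(\<lambda>\<nu>. D / real (n \<nu>)) \<longlonglongrightarrow> 0"
      using filterlim_compose[OF filterlim_real_sequentially n]
      by (intro tendsto_divide_0[OF tendsto_const] filterlim_at_top_imp_at_infinity)
  qed simp
  ultimately show "AE \<omega> in M. (\<forall>\<nu>. rej_params (N \<nu>) (\<lambda>_. 1 / real (N \<nu>))) \<and>
      (\<lambda>\<nu>. kl_div (N \<nu>) (n \<nu>) (lms (N \<nu>) (n \<nu>) (\<lambda>i. X i \<omega>))
        (rejective (N \<nu>) (n \<nu>) (\<lambda>_. 1 / real (N \<nu>)))) \<longlonglongrightarrow> 0"
    using ratio by auto
qed

lemma incl_bounded_srswor:
  assumes "\<And>\<nu>. n \<nu> < N \<nu>" and "\<forall>\<^sub>F \<nu> in sequentially. 0 < n \<nu>"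
  shows "incl_bounded M N n (\<lambda>\<nu> \<omega>. srswor (N \<nu>) (n \<nu>))"
  unfolding incl_bounded_def
proof (intro AE_I2 exI conjI)
  show "\<forall>\<^sub>F \<nu> in sequentially. \<forall>i\<in>{1..N \<nu>}.
      1 \<le> N \<nu> * incl_prob (N \<nu>) (n \<nu>) (srswor (N \<nu>) (n \<nu>)) i / n \<nu> \<and>
      N \<nu> * incl_prob (N \<nu>) (n \<nu>) (srswor (N \<nu>) (n \<nu>)) i / n \<nu> \<le> 1"
    using assms(2) by eventually_elim (use assms(1) in \<open>auto simp: incl_prob_srswor less_imp_le\<close>)
qed simp_all

lemma incl_bounded_lms:
  assumes ratio: "AE \<omega> in M. \<exists>D\<ge>1. \<forall>\<^sub>F \<nu> in sequentially. ratio_bounded (N \<nu>) D (\<lambda>i. X i \<omega>)"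
    and nN: "\<And>\<nu>. n \<nu> < N \<nu>" and n: "\<forall>\<^sub>F \<nu> in sequentially. 0 < n \<nu>"
  shows "incl_bounded M N n (\<lambda>\<nu> \<omega>. lms (N \<nu>) (n \<nu>) (\<lambda>i. X i \<omega>))"
  unfolding incl_bounded_def using ratio
proof eventually_elim
  case (elim \<omega>)
  then obtain D where "1 \<le> D" and ev: "\<forall>\<^sub>F \<nu> in sequentially. ratio_bounded (N \<nu>) D (\<lambda>i. X i \<omega>)"
    by blast
  from ev have "\<forall>\<^sub>F \<nu> in sequentially. \<forall>i\<in>{1..N \<nu>}.
      1 / D \<le> N \<nu> * incl_prob (N \<nu>) (n \<nu>) (lms (N \<nu>) (n \<nu>) (\<lambda>i. X i \<omega>)) i / n \<nu> \<and>
      N \<nu> * incl_prob (N \<nu>) (n \<nu>) (lms (N \<nu>) (n \<nu>) (\<lambda>i. X i \<omega>)) i / n \<nu> \<le> D"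
    using n by eventually_elim (use nN normalized_incl_prob_lms_bounds in \<open>auto simp: less_imp_le\<close>)
  then show ?case using \<open>1 \<le> D\<close> by (intro exI[of _ "1 / D"] exI[of _ D]) auto
qed

lemma incl_bounded_pips:
  assumes ratio: "AE \<omega> in M. \<exists>D\<ge>1. \<forall>\<^sub>F \<nu> in sequentially. ratio_bounded (N \<nu>) D (\<lambda>i. X i \<omega>)"
    and p: "pips M N n X p" and n: "\<forall>\<^sub>F \<nu> in sequentially. 0 < n \<nu>"
  shows "incl_bounded M N n p"
  unfolding incl_bounded_def using ratio p[unfolded pips_def]
proof eventually_elim
  case (elim \<omega>)
  then obtain D where "1 \<le> D" and ev: "\<forall>\<^sub>F \<nu> in sequentially. ratio_bounded (N \<nu>) D (\<lambda>i. X i \<omega>)"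
    by blast
  from ev have "\<forall>\<^sub>F \<nu> in sequentially. \<forall>i\<in>{1..N \<nu>}.
      1 / D \<le> N \<nu> * incl_prob (N \<nu>) (n \<nu>) (p \<nu> \<omega>) i / n \<nu> \<and>
      N \<nu> * incl_prob (N \<nu>) (n \<nu>) (p \<nu> \<omega>) i / n \<nu> \<le> D"
    using n elim(2) by eventually_elim (use ratio_bounded_normalized_bounds[where x = "\<lambda>i. X i \<omega>"] in auto)
  then show ?case using \<open>1 \<le> D\<close> by (intro exI[of _ "1 / D"] exI[of _ D]) auto
qed

theorem lemma1:
  fixes M :: "'a measure" and X :: "nat \<Rightarrow> 'a \<Rightarrow> real"
    and N n :: "nat \<Rightarrow> nat"
  assumes "prob_space M"
    and "\<And>i. X i \<in> borel_measurable M"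
    and "prob_space.indep_vars M (\<lambda>_. borel) X {1..}"
    and "\<And>i. i \<ge> 1 \<Longrightarrow> distr M borel (X i) = distr M borel (X 1)"
    and "\<And>i. i \<ge> 1 \<Longrightarrow> AE \<omega> in M. 0 < X i \<omega>"
    and "mono N" and "\<And>\<nu>. n \<nu> < N \<nu>"
    and "filterlim n at_top sequentially" and "filterlim N at_top sequentially"
    \<comment> \<open>(C2)\<close>
    and "\<exists>b. 0 < b \<and> (\<forall>i\<ge>1. AE \<omega> in M. X i \<omega> \<le> b)"
    and "\<And>i. i \<ge> 1 \<Longrightarrow> integrable M (\<lambda>\<omega>. (X i \<omega>) powi (-2))"
    and "AE \<omega> in M. \<exists>C. \<forall>\<^sub>F \<nu> in sequentially.
           Max ((\<lambda>i. X i \<omega>) ` {1..N \<nu>}) / Min ((\<lambda>i. X i \<omega>) ` {1..N \<nu>}) \<le> C"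
  shows "high_entropy M N n (\<lambda>\<nu> \<omega>. lms (N \<nu>) (n \<nu>) (\<lambda>i. X i \<omega>))
    \<and> incl_bounded M N n (\<lambda>\<nu> \<omega>. srswor (N \<nu>) (n \<nu>))
    \<and> incl_bounded M N n (\<lambda>\<nu> \<omega>. lms (N \<nu>) (n \<nu>) (\<lambda>i. X i \<omega>))
    \<and> (\<forall>p. (\<forall>\<nu>. \<forall>\<omega>\<in>space M. is_design (N \<nu>) (n \<nu>) (p \<nu> \<omega>))
           \<and> high_entropy M N n p \<and> pips M N n X p
           \<longrightarrow> incl_bounded M N n p)"
proof -
  have N_pos: "0 < N \<nu>" for \<nu> using assms(7)[of \<nu>] by simp
  have "\<forall>\<^sub>F \<nu> in sequentially. 1 \<le> n \<nu>" using assms(8) by (simp add: filterlim_at_top)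
  then have n_pos: "\<forall>\<^sub>F \<nu> in sequentially. 0 < n \<nu>" by (rule eventually_mono) simp
  have ratio: "AE \<omega> in M. \<exists>D\<ge>1. \<forall>\<^sub>F \<nu> in sequentially. ratio_bounded (N \<nu>) D (\<lambda>i. X i \<omega>)"
    using assms(5,12) N_pos by (rule AE_eventually_ratio_bounded)
  then have "AE \<omega> in M. \<exists>D. \<forall>\<^sub>F \<nu> in sequentially. ratio_bounded (N \<nu>) D (\<lambda>i. X i \<omega>)"
    by (rule AE_mp) (auto intro!: AE_I2)
  then show ?thesis
    using high_entropy_lms assms(7,8) incl_bounded_srswor incl_bounded_lms[OF ratio]
      incl_bounded_pips[OF ratio] n_pos
    by blast
qed

end
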